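(* Let $G=(U,V,E)$ be a finite bipartite graph, $F\subseteq E$, and let $(E_r,E_b)$ be an $(A,C)$-free bipartition of the set $E_c$ of committed edges of $G$. Fix a non-edge $uv\in\hat{E}$ with $u\in U$, $v\in V$, and define $H_r=\{u'v'\in E_r : uv'\in E_b,\ u'v\in E_b\}$, $H_b=\{u'v'\in E_b : uv'\in E_r,\ u'v\in E_r\}$ (where $u'\in U$, $v'\in V$), $H=H_r\cup H_b$, and $E_r'=(E_r\setminus H_r)\cup H_b$, $E_b'=(E_b\setminus H_b)\cup H_r$. Then no edge in $H$ is an edge of any forbidden configuration $(A_1)$, $(A_2)$, $(B_1)$, $(B_2)$ or $(C)$ of the pair $(E_r',E_b')$.
   Context: $\hat{E}=\{xy: x\in U,\ y\in V,\ xy\notin E\}$. Two edges $u_1v_1,u_2v_2\in E$ ($u_i\in U$, $v_i\in V$) are in conflict in $G$ if $u_1v_2\notin E$ and $u_2v_1\notin E$. An edge is committed if it is in conflict with some other edge of $E$; $E_c$ is the set of committed edges. A bipartition of $E_c$ is a pair $(R,B)$ with $R\cap B=\emptyset$, $R\cup B=E_c$, $F\cap E_c\subseteq B$. For a pair $(R,B)$ of disjoint subsets of $E_c$, the forbidden configurations on vertices $u_1,u_2\in U$, $v_1,v_2\in V$ are: $(A_1)$: $u_1v_1,u_2v_2\in R$, $u_1v_2,u_2v_1\in\hat{E}$; $(A_2)$: $u_1v_1,u_2v_2\in B$, $u_1v_2,u_2v_1\in\hat{E}$; $(B_1)$: $u_1v_1,u_2v_2\in R$, $u_1v_2\in\hat{E}$,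 $u_2v_1\in B$; $(B_2)$: $u_1v_1,u_2v_2\in B$, $u_1v_2\in\hat{E}$, $u_2v_1\in R$; $(C)$: $u_1v_1,u_2v_2\in R$, $u_1v_2\in\hat{E}$, $u_2v_1\in F$. The edges of a configuration are its members of $E$ (i.e. $u_1v_1,u_2v_2$, and $u_2v_1$ when it lies in $E$). $(R,B)$ is $(A,C)$-free if it has no configuration $(A_1)$, $(A_2)$ or $(C)$. *)

theory Defs
  imports Main
begin

definition bipartite_graph :: "'a set \<Rightarrow> 'a set \<Rightarrow> ('a \<times> 'a) set \<Rightarrow> bool" where
  "bipartite_graph U V E \<longleftrightarrow> finite U \<and> finite V \<and> U \<inter> V = {} \<and> E \<subseteq> U \<times> V"

definition non_edges :: "'a set \<Rightarrow> 'a set \<Rightarrow> ('a \<times> 'a) set \<Rightarrow> ('a \<times> 'a) set" where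
  "non_edges U V E = {(x, y). x \<in> U \<and> y \<in> V \<and> (x, y) \<notin> E}"

definition in_conflict :: "('a \<times> 'a) set \<Rightarrow> 'a \<times> 'a \<Rightarrow> 'a \<times> 'a \<Rightarrow> bool" where
  "in_conflict E e1 e2 \<longleftrightarrow> e1 \<in> E \<and> e2 \<in> E \<and>
     (fst e1, snd e2) \<notin> E \<and> (fst e2, snd e1) \<notin> E"

definition committed :: "('a \<times> 'a) set \<Rightarrow> ('a \<times> 'a) set" where
  "committed E = {e \<in> E. \<exists>e' \<in> E. e' \<noteq> e \<and> in_conflict E e e'}"

definition bipartition :: "('a \<times> 'a) set \<Rightarrow> ('a \<times> 'a) set \<Rightarrow> ('a \<times> 'a) set \<Rightarrow> ('a \<times> 'a) set \<Rightarrow> bool" where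
  "bipartition E F R B \<longleftrightarrow> R \<inter> B = {} \<and> R \<union> B = committed E \<and> F \<inter> committed E \<subseteq> B"

definition config_A1 :: "'a set \<Rightarrow> 'a set \<Rightarrow> ('a \<times> 'a) set \<Rightarrow> ('a \<times> 'a) set \<Rightarrow> ('a \<times> 'a) set \<Rightarrow> 'a \<Rightarrow> 'a \<Rightarrow> 'a \<Rightarrow> 'a \<Rightarrow> bool" where
  "config_A1 U V E R B u1 u2 v1 v2 \<longleftrightarrow> u1 \<in> U \<and> u2 \<in> U \<and> v1 \<in> V \<and> v2 \<in> V \<and>
     (u1, v1) \<in> R \<and> (u2, v2) \<in> R \<and> (u1, v2) \<in> non_edges U V E \<and> (u2, v1) \<in> non_edges U V E"

definition config_A2 :: "'a set \<Rightarrow> 'a set \<Rightarrow> ('a \<times> 'a) set \<Rightarrow> ('a \<times> 'a) set \<Rightarrow> ('a \<times> 'a) set \<Rightarrow> 'a \<Rightarrow> 'a \<Rightarrow> 'a \<Rightarrow> 'a \<Rightarrow> bool" where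
  "config_A2 U V E R B u1 u2 v1 v2 \<longleftrightarrow> u1 \<in> U \<and> u2 \<in> U \<and> v1 \<in> V \<and> v2 \<in> V \<and>
     (u1, v1) \<in> B \<and> (u2, v2) \<in> B \<and> (u1, v2) \<in> non_edges U V E \<and> (u2, v1) \<in> non_edges U V E"

definition config_B1 :: "'a set \<Rightarrow> 'a set \<Rightarrow> ('a \<times> 'a) set \<Rightarrow> ('a \<times> 'a) set \<Rightarrow> ('a \<times> 'a) set \<Rightarrow> 'a \<Rightarrow> 'a \<Rightarrow> 'a \<Rightarrow> 'a \<Rightarrow> bool" where
  "config_B1 U V E R B u1 u2 v1 v2 \<longleftrightarrow> u1 \<in> U \<and> u2 \<in> U \<and> v1 \<in> V \<and> v2 \<in> V \<and>
     (u1, v1) \<in> R \<and> (u2, v2) \<in> R \<and> (u1, v2) \<in> non_edges U V E \<and> (u2, v1) \<in> B"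

definition config_B2 :: "'a set \<Rightarrow> 'a set \<Rightarrow> ('a \<times> 'a) set \<Rightarrow> ('a \<times> 'a) set \<Rightarrow> ('a \<times> 'a) set \<Rightarrow> 'a \<Rightarrow> 'a \<Rightarrow> 'a \<Rightarrow> 'a \<Rightarrow> bool" where
  "config_B2 U V E R B u1 u2 v1 v2 \<longleftrightarrow> u1 \<in> U \<and> u2 \<in> U \<and> v1 \<in> V \<and> v2 \<in> V \<and>
     (u1, v1) \<in> B \<and> (u2, v2) \<in> B \<and> (u1, v2) \<in> non_edges U V E \<and> (u2, v1) \<in> R"

definition config_C :: "'a set \<Rightarrow> 'a set \<Rightarrow> ('a \<times> 'a) set \<Rightarrow> ('a \<times> 'a) set \<Rightarrow> ('a \<times> 'a) set \<Rightarrow> ('a \<times> 'a) set \<Rightarrow> 'a \<Rightarrow> 'a \<Rightarrow> 'a \<Rightarrow> 'a \<Rightarrow> bool" where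
  "config_C U V E F R B u1 u2 v1 v2 \<longleftrightarrow> u1 \<in> U \<and> u2 \<in> U \<and> v1 \<in> V \<and> v2 \<in> V \<and>
     (u1, v1) \<in> R \<and> (u2, v2) \<in> R \<and> (u1, v2) \<in> non_edges U V E \<and> (u2, v1) \<in> F"

definition forbidden_config where
  "forbidden_config U V E F R B u1 u2 v1 v2 \<longleftrightarrow>
     config_A1 U V E R B u1 u2 v1 v2 \<or> config_A2 U V E R B u1 u2 v1 v2 \<or>
     config_B1 U V E R B u1 u2 v1 v2 \<or> config_B2 U V E R B u1 u2 v1 v2 \<or>
     config_C U V E F R B u1 u2 v1 v2"

definition config_edges :: "('a \<times> 'a) set \<Rightarrow> 'a \<Rightarrow> 'a \<Rightarrow> 'a \<Rightarrow> 'a \<Rightarrow> ('a \<times> 'a) set" where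
  "config_edges E u1 u2 v1 v2 = {(u1, v1), (u2, v2), (u2, v1)} \<inter> E"

definition AC_free where
  "AC_free U V E F R B \<longleftrightarrow> (\<forall>u1 u2 v1 v2.
     \<not> config_A1 U V E R B u1 u2 v1 v2 \<and> \<not> config_A2 U V E R B u1 u2 v1 v2 \<and>
     \<not> config_C U V E F R B u1 u2 v1 v2)"

end

theory Submission
  imports Defs
begin

text \<open>
  Only configuration (C) distinguishes the two colours, so the argument is made for an abstract
  colouring X, Y of the committed edges in which no two edges of the same colour are in conflict
  (this is A-freeness), together with the non-edge uv; the switched edges of X are the edges ab
  of X with ub and av in Y. Every committed edge has a conflict partner, necessarily of the other
  colour. Given a forbidden configuration of the recoloured pair through a switched edge ab,
  playing A-freeness against ab, ub, av and such partners forces the other edges of the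
  configuration to exist and fixes their original colours; each case ends either with an edge
  that should have been switched but was not, or with an (A) or (C) configuration of the
  original colouring.
\<close>

definition AB_config where
  "AB_config U V E R B u1 u2 v1 v2 \<longleftrightarrow>
     config_A1 U V E R B u1 u2 v1 v2 \<or> config_A2 U V E R B u1 u2 v1 v2 \<or>
     config_B1 U V E R B u1 u2 v1 v2 \<or> config_B2 U V E R B u1 u2 v1 v2"

lemma AB_config_swap: "AB_config U V E R B u1 u2 v1 v2 \<longleftrightarrow> AB_config U V E B R u1 u2 v1 v2"
  unfolding AB_config_def config_A1_def config_A2_def config_B1_def config_B2_def by blast

lemma forbidden_config_iff:
  "forbidden_config U V E F R B u1 u2 v1 v2 \<longleftrightarrow>
     AB_config U V E R B u1 u2 v1 v2 \<or> config_C U V E F R B u1 u2 v1 v2"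
  unfolding forbidden_config_def AB_config_def by blast

definition switched_edges :: "('a \<times> 'a) set \<Rightarrow> ('a \<times> 'a) set \<Rightarrow> 'a \<Rightarrow> 'a \<Rightarrow> ('a \<times> 'a) set" where
  "switched_edges X Y u v = {(a, b). (a, b) \<in> X \<and> (u, b) \<in> Y \<and> (a, v) \<in> Y}"

definition switched_colour :: "('a \<times> 'a) set \<Rightarrow> ('a \<times> 'a) set \<Rightarrow> 'a \<Rightarrow> 'a \<Rightarrow> ('a \<times> 'a) set" where
  "switched_colour X Y u v = (X - switched_edges X Y u v) \<union> switched_edges Y X u v"

lemma switched_edges_iff [simp]:
  "(a, b) \<in> switched_edges X Y u v \<longleftrightarrow> (a, b) \<in> X \<and> (u, b) \<in> Y \<and> (a, v) \<in> Y"
  by (simp add: switched_edges_def)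

lemma committed_if_conflict:
  assumes "(a, b) \<in> E" "(c, d) \<in> E" "(a, d) \<notin> E" "(c, b) \<notin> E"
  shows "(a, b) \<in> committed E"
proof -
  have "(c, d) \<noteq> (a, b)" using assms by auto
  with assms show ?thesis unfolding committed_def in_conflict_def by fastforce
qed

lemma committed_obtain_conflict:
  assumes "(a, b) \<in> committed E"
  obtains c d where "(c, d) \<in> E" "(a, d) \<notin> E" "(c, b) \<notin> E"
  using assms unfolding committed_def in_conflict_def by fastforce

text \<open>Two edges (a, b) and (c, d) are in conflict iff (a, d) and (c, b) are non-edges, so
  X_A_free and Y_A_free say exactly that the colouring has no configuration (A1) or (A2).\<close>

locale A_free_colouring =
  fixes E X Y :: "('a \<times> 'a) set"
  assumes disjoint: "X \<inter> Y = {}"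
    and covers: "X \<union> Y = committed E"
    and X_A_free: "(a, b) \<in> X \<Longrightarrow> (c, d) \<in> X \<Longrightarrow> (a, d) \<in> E \<or> (c, b) \<in> E"
    and Y_A_free: "(a, b) \<in> Y \<Longrightarrow> (c, d) \<in> Y \<Longrightarrow> (a, d) \<in> E \<or> (c, b) \<in> E"
begin

lemma X_edge: "p \<in> X \<Longrightarrow> p \<in> E" and Y_edge: "p \<in> Y \<Longrightarrow> p \<in> E"
  using covers by (auto simp: committed_def)

lemma coloured_if_conflict:
  assumes "(a, b) \<in> E" "(c, d) \<in> E" "(a, d) \<notin> E" "(c, b) \<notin> E"
  shows "(a, b) \<in> X \<or> (a, b) \<in> Y"
proof -
  have "(a, b) \<in> X \<union> Y"
    unfolding covers using assms by (rule committed_if_conflict)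
  then show ?thesis by simp
qed

lemma X_if_conflict_Y:
  "(a, b) \<in> E \<Longrightarrow> (c, d) \<in> Y \<Longrightarrow> (a, d) \<notin> E \<Longrightarrow> (c, b) \<notin> E \<Longrightarrow> (a, b) \<in> X"
  using coloured_if_conflict Y_edge Y_A_free by blast

lemma Y_if_conflict_X:
  "(a, b) \<in> E \<Longrightarrow> (c, d) \<in> X \<Longrightarrow> (a, d) \<notin> E \<Longrightarrow> (c, b) \<notin> E \<Longrightarrow> (a, b) \<in> Y"
  using coloured_if_conflict X_edge X_A_free by blast

lemma X_obtain_conflict:
  assumes "(a, b) \<in> X"
  obtains c d where "(c, d) \<in> Y" "(a, d) \<notin> E" "(c, b) \<notin> E"
proof -
  have "(a, b) \<in> committed E" using assms unfolding covers[symmetric] by simp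
  then obtain c d where cd: "(c, d) \<in> E" "(a, d) \<notin> E" "(c, b) \<notin> E"
    by (rule committed_obtain_conflict)
  then have "(c, d) \<in> Y" using Y_if_conflict_X assms X_edge by blast
  with cd that show ?thesis by blast
qed

lemma Y_obtain_conflict:
  assumes "(a, b) \<in> Y"
  obtains c d where "(c, d) \<in> X" "(a, d) \<notin> E" "(c, b) \<notin> E"
proof -
  have "(a, b) \<in> committed E" using assms unfolding covers[symmetric] by simp
  then obtain c d where cd: "(c, d) \<in> E" "(a, d) \<notin> E" "(c, b) \<notin> E"
    by (rule committed_obtain_conflict)
  then have "(c, d) \<in> X" using X_if_conflict_Y assms Y_edge by blast
  with cd that show ?thesis by blast
qed

end

locale switching = A_free_colouring +
  fixes u v :: 'a
  assumes non_edge: "(u, v) \<notin> E"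
begin

abbreviation "X' \<equiv> switched_colour X Y u v"
abbreviation "Y' \<equiv> switched_colour Y X u v"

lemma switched_in_Y': "(a, b) \<in> switched_edges X Y u v \<Longrightarrow> (a, b) \<in> Y'"
  by (simp add: switched_colour_def)

lemma switched_notin_X': "(a, b) \<in> switched_edges X Y u v \<Longrightarrow> (a, b) \<notin> X'"
  using disjoint by (auto simp: switched_colour_def)

text \<open>In a configuration on u1, u2, v1, v2 we call u1v1 its first, u2v2 its second and u2v1 its
  cross edge; the lemmas below each place the switched edge ab in one of these positions.\<close>

lemma switched_edge_not_in_A_config:
  assumes ab: "(a, b) \<in> switched_edges X Y u v"
    and cd: "(c, d) \<in> Y'" and "(a, d) \<notin> E" "(c, b) \<notin> E"
  shows False
proof -
  from ab have "(u, b) \<in> Y" "(a, v) \<in> Y" by simp_all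
  from cd consider "(c, d) \<in> switched_edges X Y u v" | "(c, d) \<in> Y" "(c, d) \<notin> switched_edges Y X u v"
    by (auto simp: switched_colour_def)
  then show False
  proof cases
    case 1
    then show False using Y_A_free[of u d a v] \<open>(a, v) \<in> Y\<close> \<open>(a, d) \<notin> E\<close> non_edge by auto
  next
    case 2
    have "(c, v) \<in> E" using Y_A_free[of a v c d] \<open>(a, v) \<in> Y\<close> 2 \<open>(a, d) \<notin> E\<close> by blast
    then have "(c, v) \<in> X" using X_if_conflict_Y \<open>(u, b) \<in> Y\<close> \<open>(c, b) \<notin> E\<close> non_edge by blast
    have "(u, d) \<in> E" using Y_A_free[of u b c d] \<open>(u, b) \<in> Y\<close> 2 \<open>(c, b) \<notin> E\<close> by blast
    then have "(u, d) \<in> X" using X_if_conflict_Y \<open>(a, v) \<in> Y\<close> \<open>(a, d) \<notin> E\<close> non_edge by blast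
    with \<open>(c, v) \<in> X\<close> 2 show False by simp
  qed
qed

lemma switched_edge_not_first_in_B_config:
  assumes ab: "(a, b) \<in> switched_edges X Y u v"
    and cd: "(c, d) \<in> Y'" and ad: "(a, d) \<notin> E" and cb: "(c, b) \<in> X'"
  shows False
proof -
  from ab have "(a, b) \<in> X" "(u, b) \<in> Y" "(a, v) \<in> Y" by simp_all
  have "(c, b) \<in> X" "(c, b) \<notin> switched_edges X Y u v"
    using cb \<open>(u, b) \<in> Y\<close> disjoint by (auto simp: switched_colour_def)
  then have "(c, v) \<notin> Y" using \<open>(u, b) \<in> Y\<close> by simp
  have "(c, d) \<notin> switched_edges X Y u v"
    using Y_A_free[of u d a v] \<open>(a, v) \<in> Y\<close> ad non_edge by auto
  then have "(c, d) \<in> Y" "(c, d) \<notin> switched_edges Y X u v"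
    using cd by (auto simp: switched_colour_def)
  have "(c, v) \<in> E" using Y_A_free[of a v c d] \<open>(a, v) \<in> Y\<close> \<open>(c, d) \<in> Y\<close> ad by blast
  obtain x y where xy: "(x, y) \<in> Y" "(c, y) \<notin> E" "(x, b) \<notin> E"
    using X_obtain_conflict \<open>(c, b) \<in> X\<close> by blast
  have "(u, y) \<in> E" using Y_A_free[of u b x y] \<open>(u, b) \<in> Y\<close> xy by blast
  have "(c, v) \<in> X"
    using coloured_if_conflict[of c v u y] \<open>(c, v) \<in> E\<close> \<open>(u, y) \<in> E\<close> xy non_edge \<open>(c, v) \<notin> Y\<close>
    by blast
  have "(u, y) \<in> Y" using Y_if_conflict_X \<open>(u, y) \<in> E\<close> \<open>(c, v) \<in> X\<close> xy non_edge by blast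
  have "(u, d) \<in> E" using Y_A_free[of u y c d] \<open>(u, y) \<in> Y\<close> \<open>(c, d) \<in> Y\<close> xy by blast
  then have "(u, d) \<in> X" using X_if_conflict_Y \<open>(a, v) \<in> Y\<close> ad non_edge by blast
  with \<open>(c, v) \<in> X\<close> \<open>(c, d) \<in> Y\<close> \<open>(c, d) \<notin> switched_edges Y X u v\<close> show False by simp
qed

lemma switched_edge_not_second_in_B_config:
  assumes ab: "(a, b) \<in> switched_edges X Y u v"
    and pq: "(p, q) \<in> Y'" and pb: "(p, b) \<notin> E" and aq: "(a, q) \<in> X'"
  shows False
proof -
  from ab have "(u, b) \<in> Y" "(a, v) \<in> Y" by simp_all
  have "(a, q) \<in> X" "(a, q) \<notin> switched_edges X Y u v"
    using aq \<open>(a, v) \<in> Y\<close> disjoint by (auto simp: switched_colour_def)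
  then have "(u, q) \<notin> Y" using \<open>(a, v) \<in> Y\<close> by simp
  then have "(p, q) \<in> Y" "(p, q) \<notin> switched_edges Y X u v"
    using pq by (auto simp: switched_colour_def)
  have "(u, q) \<in> E" using Y_A_free[of u b p q] \<open>(u, b) \<in> Y\<close> \<open>(p, q) \<in> Y\<close> pb by blast
  obtain x y where xy: "(x, y) \<in> Y" "(a, y) \<notin> E" "(x, q) \<notin> E"
    using X_obtain_conflict \<open>(a, q) \<in> X\<close> by blast
  have "(x, v) \<in> E" using Y_A_free[of a v x y] \<open>(a, v) \<in> Y\<close> xy by blast
  have "(u, q) \<in> X"
    using coloured_if_conflict[of u q x v] \<open>(u, q) \<in> E\<close> \<open>(x, v) \<in> E\<close> xy non_edge \<open>(u, q) \<notin> Y\<close>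
    by blast
  have "(x, v) \<in> Y" using Y_if_conflict_X \<open>(x, v) \<in> E\<close> \<open>(u, q) \<in> X\<close> xy non_edge by blast
  have "(p, v) \<in> E" using Y_A_free[of p q x v] \<open>(p, q) \<in> Y\<close> \<open>(x, v) \<in> Y\<close> xy by blast
  then have "(p, v) \<in> X" using X_if_conflict_Y \<open>(u, b) \<in> Y\<close> pb non_edge by blast
  with \<open>(u, q) \<in> X\<close> \<open>(p, q) \<in> Y\<close> \<open>(p, q) \<notin> switched_edges Y X u v\<close> show False by simp
qed

lemma switched_edge_not_cross_in_B_config:
  assumes ab: "(a, b) \<in> switched_edges X Y u v"
    and pb: "(p, b) \<in> X'" and aq: "(a, q) \<in> X'" and pq: "(p, q) \<notin> E"
  shows False
proof -
  from ab have "(a, b) \<in> X" "(u, b) \<in> Y" "(a, v) \<in> Y" by simp_all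
  have "(p, b) \<in> X" "(p, v) \<notin> Y"
    using pb \<open>(u, b) \<in> Y\<close> disjoint by (auto simp: switched_colour_def)
  have "(a, q) \<in> X" "(u, q) \<notin> Y"
    using aq \<open>(a, v) \<in> Y\<close> disjoint by (auto simp: switched_colour_def)
  obtain x y where xy: "(x, y) \<in> Y" "(a, y) \<notin> E" "(x, b) \<notin> E"
    using X_obtain_conflict \<open>(a, b) \<in> X\<close> by blast
  have "(x, v) \<in> E" using Y_A_free[of a v x y] \<open>(a, v) \<in> Y\<close> xy by blast
  then have "(x, v) \<in> X" using X_if_conflict_Y \<open>(u, b) \<in> Y\<close> xy non_edge by blast
  have "(u, y) \<in> E" using Y_A_free[of u b x y] \<open>(u, b) \<in> Y\<close> xy by blast
  then have "(u, y) \<in> X" using X_if_conflict_Y \<open>(a, v) \<in> Y\<close> xy non_edge by blast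
  have "(p, v) \<in> E" using X_A_free[of x v p b] \<open>(x, v) \<in> X\<close> \<open>(p, b) \<in> X\<close> xy by blast
  have "(u, q) \<in> E" using X_A_free[of u y a q] \<open>(u, y) \<in> X\<close> \<open>(a, q) \<in> X\<close> xy by blast
  have "(u, q) \<in> X" "(p, v) \<in> X"
    using coloured_if_conflict \<open>(u, q) \<in> E\<close> \<open>(p, v) \<in> E\<close> pq non_edge \<open>(u, q) \<notin> Y\<close> \<open>(p, v) \<notin> Y\<close>
    by blast+
  then show False using X_A_free[of u q p v] pq non_edge by blast
qed

lemma switched_edge_not_in_AB_config:
  assumes p: "p \<in> switched_edges X Y u v"
    and cfg: "AB_config U V E X' Y' u1 u2 v1 v2"
    and edge: "p \<in> config_edges E u1 u2 v1 v2"
  shows False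
proof -
  obtain a b where ab: "p = (a, b)" by fastforce
  have "(a, b) \<in> Y'" "(a, b) \<notin> X'" using p switched_in_Y' switched_notin_X' by (auto simp: ab)
  from cfg consider
      "(u1, v1) \<in> X'" "(u2, v2) \<in> X'" "(u1, v2) \<notin> E" "(u2, v1) \<notin> E"
    | "(u1, v1) \<in> Y'" "(u2, v2) \<in> Y'" "(u1, v2) \<notin> E" "(u2, v1) \<notin> E"
    | "(u1, v1) \<in> X'" "(u2, v2) \<in> X'" "(u1, v2) \<notin> E" "(u2, v1) \<in> Y'"
    | "(u1, v1) \<in> Y'" "(u2, v2) \<in> Y'" "(u1, v2) \<notin> E" "(u2, v1) \<in> X'"
    unfolding AB_config_def config_A1_def config_A2_def config_B1_def config_B2_def non_edges_def
    by blast
  then show False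
    using p edge \<open>(a, b) \<in> Y'\<close> \<open>(a, b) \<notin> X'\<close> unfolding ab config_edges_def
    by cases (auto simp del: switched_edges_iff
        dest: switched_edge_not_in_A_config switched_edge_not_first_in_B_config
          switched_edge_not_second_in_B_config switched_edge_not_cross_in_B_config)
qed

lemma switched_edge_not_in_C_config_of_X':
  assumes "p \<in> switched_edges X Y u v" "p \<notin> F"
    and "config_C U V E F X' Y' u1 u2 v1 v2" "p \<in> config_edges E u1 u2 v1 v2"
  shows False
  using assms switched_notin_X' unfolding config_C_def config_edges_def by blast

end

locale switching_C = switching +
  fixes F :: "('a \<times> 'a) set"
  assumes Y_C_free: "(a, b) \<in> Y \<Longrightarrow> (c, d) \<in> Y \<Longrightarrow> (c, b) \<in> F \<Longrightarrow> (a, d) \<in> E"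
begin

lemma switched_edge_not_first_in_C_config:
  assumes ab: "(a, b) \<in> switched_edges X Y u v"
    and cd: "(c, d) \<in> Y'" and ad: "(a, d) \<notin> E" and cb: "(c, b) \<in> F"
  shows False
proof -
  from ab have "(u, b) \<in> Y" "(a, v) \<in> Y" by simp_all
  have "(c, d) \<notin> switched_edges X Y u v"
    using Y_A_free[of u d a v] \<open>(a, v) \<in> Y\<close> ad non_edge by auto
  then have "(c, d) \<in> Y" "(c, d) \<notin> switched_edges Y X u v"
    using cd by (auto simp: switched_colour_def)
  have "(c, v) \<in> E" using Y_A_free[of a v c d] \<open>(a, v) \<in> Y\<close> \<open>(c, d) \<in> Y\<close> ad by blast
  have "(u, d) \<in> E" using Y_C_free[of u b c d] \<open>(u, b) \<in> Y\<close> \<open>(c, d) \<in> Y\<close> cb by blast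
  then have "(u, d) \<in> X" using X_if_conflict_Y \<open>(a, v) \<in> Y\<close> ad non_edge by blast
  then have "(c, v) \<notin> X" using \<open>(c, d) \<in> Y\<close> \<open>(c, d) \<notin> switched_edges Y X u v\<close> by simp
  obtain x y where xy: "(x, y) \<in> X" "(c, y) \<notin> E" "(x, d) \<notin> E"
    using Y_obtain_conflict \<open>(c, d) \<in> Y\<close> by blast
  have "(u, y) \<in> E" using X_A_free[of u d x y] \<open>(u, d) \<in> X\<close> xy by blast
  have "(c, v) \<in> Y"
    using coloured_if_conflict[of c v u y] \<open>(c, v) \<in> E\<close> \<open>(u, y) \<in> E\<close> xy non_edge \<open>(c, v) \<notin> X\<close>
    by blast
  then show False using Y_C_free[of u b c v] \<open>(u, b) \<in> Y\<close> cb non_edge by blast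
qed

lemma switched_edge_not_second_in_C_config:
  assumes ab: "(a, b) \<in> switched_edges X Y u v"
    and pq: "(p, q) \<in> Y'" and pb: "(p, b) \<notin> E" and aq: "(a, q) \<in> F"
  shows False
proof -
  from ab have "(u, b) \<in> Y" "(a, v) \<in> Y" by simp_all
  have "(u, q) \<notin> Y" using Y_C_free[of u q a v] \<open>(a, v) \<in> Y\<close> aq non_edge by blast
  then have "(p, q) \<in> Y" "(p, q) \<notin> switched_edges Y X u v"
    using pq by (auto simp: switched_colour_def)
  have "(p, v) \<in> E" using Y_C_free[of p q a v] \<open>(p, q) \<in> Y\<close> \<open>(a, v) \<in> Y\<close> aq by blast
  then have "(p, v) \<in> X" using X_if_conflict_Y \<open>(u, b) \<in> Y\<close> pb non_edge by blast
  then have "(u, q) \<notin> X" using \<open>(p, q) \<in> Y\<close> \<open>(p, q) \<notin> switched_edges Y X u v\<close> by simp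
  have "(u, q) \<in> E" using Y_A_free[of p q u b] \<open>(p, q) \<in> Y\<close> \<open>(u, b) \<in> Y\<close> pb by blast
  obtain x y where xy: "(x, y) \<in> X" "(p, y) \<notin> E" "(x, q) \<notin> E"
    using Y_obtain_conflict \<open>(p, q) \<in> Y\<close> by blast
  have "(x, v) \<notin> E"
    using coloured_if_conflict[of u q x v] \<open>(u, q) \<in> E\<close> xy non_edge \<open>(u, q) \<notin> X\<close> \<open>(u, q) \<notin> Y\<close>
    by blast
  then show False using X_A_free[of p v x y] \<open>(p, v) \<in> X\<close> xy by blast
qed

lemma switched_edge_not_in_C_config:
  assumes p: "p \<in> switched_edges X Y u v"
    and cfg: "config_C U V E F Y' X' u1 u2 v1 v2"
    and edge: "p \<in> config_edges E u1 u2 v1 v2"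
  shows False
proof -
  obtain a b where ab: "p = (a, b)" by fastforce
  have "(a, b) \<notin> F" using p Y_C_free[of u b a v] non_edge by (auto simp: ab)
  from cfg have "(u1, v1) \<in> Y'" "(u2, v2) \<in> Y'" "(u1, v2) \<notin> E" "(u2, v1) \<in> F"
    unfolding config_C_def non_edges_def by auto
  then show False
    using p edge \<open>(a, b) \<notin> F\<close> unfolding ab config_edges_def
    by (auto simp del: switched_edges_iff
        dest: switched_edge_not_first_in_C_config switched_edge_not_second_in_C_config)
qed

end

lemma A_free_colouring_swap:
  assumes "A_free_colouring E X Y"
  shows "A_free_colouring E Y X"
proof -
  interpret A_free_colouring E X Y by (fact assms)
  show ?thesis
    by unfold_locales (simp_all add: Int_commute Un_commute disjoint covers X_A_free Y_A_free)
qed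

lemma A_free_colouring_if_AC_free:
  assumes E: "E \<subseteq> U \<times> V" and part: "bipartition E F R B" and free: "AC_free U V E F R B"
  shows "A_free_colouring E R B"
proof
  show "R \<inter> B = {}" "R \<union> B = committed E" using part by (simp_all add: bipartition_def)
  then have "R \<subseteq> U \<times> V" "B \<subseteq> U \<times> V" using E by (auto simp: committed_def)
  fix a b c d
  show "(a, d) \<in> E \<or> (c, b) \<in> E" if "(a, b) \<in> R" "(c, d) \<in> R"
    using free that \<open>R \<subseteq> U \<times> V\<close> unfolding AC_free_def config_A1_def non_edges_def by blast
  show "(a, d) \<in> E \<or> (c, b) \<in> E" if "(a, b) \<in> B" "(c, d) \<in> B"
    using free that \<open>B \<subseteq> U \<times> V\<close> unfolding AC_free_def config_A2_def non_edges_def by blast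
qed

lemma C_free_if_AC_free:
  assumes E: "E \<subseteq> U \<times> V" and part: "bipartition E F R B" and free: "AC_free U V E F R B"
    and "(a, b) \<in> R" "(c, d) \<in> R" "(c, b) \<in> F"
  shows "(a, d) \<in> E"
proof -
  have "R \<subseteq> U \<times> V" using part E by (auto simp: bipartition_def committed_def)
  with assms show ?thesis unfolding AC_free_def config_C_def non_edges_def by blast
qed

theorem lemma2:
  fixes U V :: "'a set" and E F Er Eb :: "('a \<times> 'a) set" and u v :: 'a
  assumes "bipartite_graph U V E"
    and "F \<subseteq> E"
    and "bipartition E F Er Eb"
    and "AC_free U V E F Er Eb"
    and "u \<in> U" and "v \<in> V" and "(u, v) \<in> non_edges U V E"
  defines "Hr \<equiv> {(u', v'). (u', v') \<in> Er \<and> (u, v') \<in> Eb \<and> (u', v) \<in> Eb}"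
    and "Hb \<equiv> {(u', v'). (u', v') \<in> Eb \<and> (u, v') \<in> Er \<and> (u', v) \<in> Er}"
  defines "H \<equiv> Hr \<union> Hb"
    and "Er' \<equiv> (Er - Hr) \<union> Hb"
    and "Eb' \<equiv> (Eb - Hb) \<union> Hr"
  shows "\<forall>e \<in> H. \<forall>u1 u2 v1 v2.
           forbidden_config U V E F Er' Eb' u1 u2 v1 v2 \<longrightarrow> e \<notin> config_edges E u1 u2 v1 v2"
proof -
  have "E \<subseteq> U \<times> V" using assms(1) by (simp add: bipartite_graph_def)
  note colouring = A_free_colouring_if_AC_free[OF this assms(3,4)]
  have "(u, v) \<notin> E" using assms(7) by (simp add: non_edges_def)
  interpret red: switching E Er Eb u v
    using colouring \<open>(u, v) \<notin> E\<close> by (simp add: switching_def switching_axioms_def)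
  interpret blue: switching_C E Eb Er u v F
    using A_free_colouring_swap[OF colouring] \<open>(u, v) \<notin> E\<close>
      C_free_if_AC_free[OF \<open>E \<subseteq> U \<times> V\<close> assms(3,4)]
    by (simp add: switching_C_def switching_C_axioms_def switching_def switching_axioms_def)
  have Hr: "Hr = switched_edges Er Eb u v" and Hb: "Hb = switched_edges Eb Er u v"
    by (auto simp: Hr_def Hb_def)
  have recoloured: "Er' = switched_colour Er Eb u v" "Eb' = switched_colour Eb Er u v"
    by (simp_all add: Er'_def Eb'_def Hr Hb switched_colour_def)
  have "F \<inter> Er = {}" using assms(3) by (auto simp: bipartition_def)
  show ?thesis
  proof (intro ballI allI impI notI)
    fix e u1 u2 v1 v2
    assume "e \<in> H" and cfg: "forbidden_config U V E F Er' Eb' u1 u2 v1 v2"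
      and edge: "e \<in> config_edges E u1 u2 v1 v2"
    from \<open>e \<in> H\<close> show False
      unfolding H_def Hr Hb
    proof
      assume "e \<in> switched_edges Er Eb u v"
      moreover have "e \<notin> F" using calculation \<open>F \<inter> Er = {}\<close> by (cases e) auto
      ultimately show False
        using cfg edge red.switched_edge_not_in_AB_config red.switched_edge_not_in_C_config_of_X'
        unfolding forbidden_config_iff recoloured by blast
    next
      assume "e \<in> switched_edges Eb Er u v"
      then show False
        using cfg edge unfolding forbidden_config_iff recoloured
        by (metis AB_config_swap blue.switched_edge_not_in_AB_config blue.switched_edge_not_in_C_config)
    qed
  qed
qed

end
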